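(* Consider Dallal's model and the hypotheses $H_0:\lambda_0=\lambda_1$ versus $H_1:\lambda_0\ne\lambda_1$. Under $H_1$ use the prior on $(0,1)^3$ $$\pi_{H_1}(\gamma,u,v)=\frac1K\frac{2^{1/2}}{B(\tfrac12,\tfrac12)}\frac{\gamma^{-1/2}(1-\gamma)^{-1/2}}{1+\gamma}(u+rv)^d\frac{u^{-1/2}(1-u)^{-1/2}}{B(\tfrac12,\tfrac12)}\frac{v^{-1/2}(1-v)^{-1/2}}{B(\tfrac12,\tfrac12)}$$ ($d\ge0$, $K$ the normalizing constant), and under $H_0$, writing $\theta=(1+\gamma)\lambda$ for the common value $\lambda=\lambda_0=\lambda_1$, use the prior $\pi_{H_0}(\gamma,\theta)=\frac{2^{1/2}}{B(\frac12,\frac12)}\frac{\gamma^{-1/2}(1-\gamma)^{-1/2}}{1+\gamma}\frac{\theta^{a-1}(1-\theta)^{-1/2}}{B(a,\frac12)}$ on $(0,1)^2$ ($a>0$). Then the marginal predictive probabilities of the data are $$p_{H_0}(D)=C\,\frac{B(m_{1+}+\tfrac12,m_{2+}+\tfrac12)}{B(\tfrac12,\tfrac12)}\frac{B(m_{1+}+m_{2+}+a,m_{0+}+\tfrac12)}{B(a,\tfrac12)},$$ $$p_{H_1}(D)=C\,\frac{B(m_{1+}+\tfrac12,m_{2+}+\tfrac12)B(m_{10}+m_{20}+\tfrac12,m_{00}+\tfrac12)B(m_{11}+m_{21}+\tfrac12,m_{01}+\tfrac12)}{B(\tfrac12,\tfrac12)^3}\cdot\frac{I}{K},$$ where $C=\binom{m_{+0}}{m_{00},m_{10},m_{20}}\binom{m_{+1}}{m_{01},m_{11},m_{21}}$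 and $I=\mathbb E[(U'+rV')^d]$ for independent $U'\sim\mathrm{Beta}(m_{10}+m_{20}+\tfrac12,m_{00}+\tfrac12)$, $V'\sim\mathrm{Beta}(m_{11}+m_{21}+\tfrac12,m_{01}+\tfrac12)$. Consequently the Bayes factor $BF_\lambda=p_{H_0}(D)/p_{H_1}(D)$ satisfies $$\frac1{BF_\lambda}=\frac{B(m_{10}+m_{20}+\tfrac12,m_{00}+\tfrac12)\,B(m_{11}+m_{21}+\tfrac12,m_{01}+\tfrac12)\,B(a,\tfrac12)}{B(m_{1+}+m_{2+}+a,m_{0+}+\tfrac12)\,B(\tfrac12,\tfrac12)^2}\cdot\frac IK .$$ In particular, for $d=0$ one has $K=I=1$.
   Context: Dallal's model: for groups $i\in\{0,1\}$ with fixed sizes $m_{+i}$, $(m_{0i},m_{1i},m_{2i})$ is trinomial with probabilities $1-(1+\gamma)\lambda_i$, $2\gamma\lambda_i$, $(1-\gamma)\lambda_i$, independently over $i$, $0<\gamma<1$, $0<\lambda_i<1/(1+\gamma)$. $U=(1+\gamma)\lambda_0$, $V=(1+\gamma)\lambda_1$, $r=m_{+1}/m_{+0}$, $m_{1+}=m_{10}+m_{11}$, $m_{2+}=m_{20}+m_{21}$, $m_{0+}=m_{00}+m_{01}$. The marginal predictive probability under a hypothesis is the likelihood (including multinomial coefficients) integrated against that hypothesis's prior. $B$ is the Beta function. *)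

theory Defs
  imports "HOL-Analysis.Analysis"
begin

text \<open>Data: m j i = m_{ji}, category j in {0,1,2}, group i in {0,1}.\<close>

definition col :: "(nat \<Rightarrow> nat \<Rightarrow> nat) \<Rightarrow> nat \<Rightarrow> nat" where
  "col m i = m 0 i + m 1 i + m 2 i"

definition row :: "(nat \<Rightarrow> nat \<Rightarrow> nat) \<Rightarrow> nat \<Rightarrow> nat" where
  "row m j = m j 0 + m j 1"

definition ratio :: "(nat \<Rightarrow> nat \<Rightarrow> nat) \<Rightarrow> real" where
  "ratio m = real (col m 1) / real (col m 0)"

definition multinom3 :: "nat \<Rightarrow> nat \<Rightarrow> nat \<Rightarrow> real" where
  "multinom3 a b c = fact (a + b + c) / (fact a * fact b * fact c)"

definition mcoef :: "(nat \<Rightarrow> nat \<Rightarrow> nat) \<Rightarrow> real" where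
  "mcoef m = multinom3 (m 0 0) (m 1 0) (m 2 0) * multinom3 (m 0 1) (m 1 1) (m 2 1)"

definition group_lik :: "(nat \<Rightarrow> nat \<Rightarrow> nat) \<Rightarrow> nat \<Rightarrow> real \<Rightarrow> real \<Rightarrow> real" where
  "group_lik m i g l =
     multinom3 (m 0 i) (m 1 i) (m 2 i) *
     (1 - (1 + g) * l) ^ m 0 i * (2 * g * l) ^ m 1 i * ((1 - g) * l) ^ m 2 i"

definition dallal_lik :: "(nat \<Rightarrow> nat \<Rightarrow> nat) \<Rightarrow> real \<Rightarrow> real \<Rightarrow> real \<Rightarrow> real" where
  "dallal_lik m g l0 l1 = group_lik m 0 g l0 * group_lik m 1 g l1"

definition beta_density :: "real \<Rightarrow> real \<Rightarrow> real \<Rightarrow> real" where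
  "beta_density p q x = x powr (p - 1) * (1 - x) powr (q - 1) / Beta p q"

definition gamma_prior :: "real \<Rightarrow> real" where
  "gamma_prior g = sqrt 2 / Beta (1/2) (1/2) * (g powr (-1/2) * (1 - g) powr (-1/2) / (1 + g))"

definition prior_H1_unnorm :: "real \<Rightarrow> real \<Rightarrow> real \<Rightarrow> real \<Rightarrow> real \<Rightarrow> real" where
  "prior_H1_unnorm r d g u v =
     gamma_prior g * (u + r * v) powr d *
     (u powr (-1/2) * (1 - u) powr (-1/2) / Beta (1/2) (1/2)) *
     (v powr (-1/2) * (1 - v) powr (-1/2) / Beta (1/2) (1/2))"

abbreviation cube :: "(real \<times> real \<times> real) set" where
  "cube \<equiv> {0<..<1} \<times> {0<..<1} \<times> {0<..<1}"

abbreviation square :: "(real \<times> real) set" where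
  "square \<equiv> {0<..<1} \<times> {0<..<1}"

definition K_const :: "real \<Rightarrow> real \<Rightarrow> real" where
  "K_const r d = set_lebesgue_integral (lborel \<Otimes>\<^sub>M lborel \<Otimes>\<^sub>M lborel) cube
                    (\<lambda>(g, u, v). prior_H1_unnorm r d g u v)"

definition prior_H1 :: "real \<Rightarrow> real \<Rightarrow> real \<Rightarrow> real \<Rightarrow> real \<Rightarrow> real" where
  "prior_H1 r d g u v = prior_H1_unnorm r d g u v / K_const r d"

definition prior_H0 :: "real \<Rightarrow> real \<Rightarrow> real \<Rightarrow> real" where
  "prior_H0 a g t = gamma_prior g * (t powr (a - 1) * (1 - t) powr (-1/2) / Beta a (1/2))"

definition pH1 :: "(nat \<Rightarrow> nat \<Rightarrow> nat) \<Rightarrow> real \<Rightarrow> real" where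
  "pH1 m d = set_lebesgue_integral (lborel \<Otimes>\<^sub>M lborel \<Otimes>\<^sub>M lborel) cube
     (\<lambda>(g, u, v). dallal_lik m g (u / (1 + g)) (v / (1 + g)) * prior_H1 (ratio m) d g u v)"

definition pH0 :: "(nat \<Rightarrow> nat \<Rightarrow> nat) \<Rightarrow> real \<Rightarrow> real" where
  "pH0 m a = set_lebesgue_integral (lborel \<Otimes>\<^sub>M lborel) square
     (\<lambda>(g, t). dallal_lik m g (t / (1 + g)) (t / (1 + g)) * prior_H0 a g t)"

definition I_const :: "(nat \<Rightarrow> nat \<Rightarrow> nat) \<Rightarrow> real \<Rightarrow> real" where
  "I_const m d = set_lebesgue_integral (lborel \<Otimes>\<^sub>M lborel) square
     (\<lambda>(u, v). (u + ratio m * v) powr d *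
        beta_density (real (m 1 0 + m 2 0) + 1/2) (real (m 0 0) + 1/2) u *
        beta_density (real (m 1 1 + m 2 1) + 1/2) (real (m 0 1) + 1/2) v)"

end

theory Submission
  imports Defs
begin

text \<open>Put \<open>s = 2\<gamma>/(1+\<gamma>)\<close>, the probability of category 1 given that the category is not 0.
  With \<open>\<lambda>\<^sub>0 = u/(1+\<gamma>)\<close> and \<open>\<lambda>\<^sub>1 = v/(1+\<gamma>)\<close> the likelihood factorises into
  \<open>s ^ m\<^sub>1\<^sub>+ * (1-s) ^ m\<^sub>2\<^sub>+\<close> times a binomial kernel in \<open>u\<close> and one in \<open>v\<close>
  (under \<open>H\<^sub>0\<close>, \<open>u = v = \<theta>\<close>). The prior of \<open>\<gamma>\<close> is precisely the image of the
  \<open>Beta(1/2,1/2)\<close> law under \<open>\<gamma> \<mapsto> s\<close>, so the \<open>\<gamma>\<close>-integral is a Beta function, and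
  Beta-binomial conjugacy turns the \<open>u\<close>-, \<open>v\<close>- and \<open>\<theta>\<close>-factors into Beta densities times
  ratios of Beta functions. Tonelli's theorem for products of non-negative factors then yields
  both marginals; for \<open>d = 0\<close> the integrands defining \<open>K\<close> and \<open>I\<close> are products of
  probability densities.\<close>

lemma nn_integral_pair_measure_mult:
  assumes "sigma_finite_measure N"
    and [measurable]: "f \<in> borel_measurable M" "g \<in> borel_measurable N"
  shows "(\<integral>\<^sup>+z. f (fst z) * g (snd z) \<partial>(M \<Otimes>\<^sub>M N)) = integral\<^sup>N M f * integral\<^sup>N N g"
proof -
  have "(\<integral>\<^sup>+z. f (fst z) * g (snd z) \<partial>(M \<Otimes>\<^sub>M N)) = (\<integral>\<^sup>+x. \<integral>\<^sup>+y. f x * g y \<partial>N \<partial>M)"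
    using sigma_finite_measure.nn_integral_fst[OF assms(1), of "\<lambda>z. f (fst z) * g (snd z)" M]
    by simp
  also have "\<dots> = integral\<^sup>N M f * integral\<^sup>N N g"
    by (simp add: nn_integral_cmult nn_integral_multc)
  finally show ?thesis .
qed

lemma set_integral_Times_mult:
  fixes f :: "'a \<Rightarrow> real" and g :: "'b \<Rightarrow> real"
  assumes "sigma_finite_measure N"
    and [measurable]: "A \<in> sets M" "B \<in> sets N" "f \<in> borel_measurable M" "g \<in> borel_measurable N"
    and "\<And>x. x \<in> A \<Longrightarrow> 0 \<le> f x" "\<And>y. y \<in> B \<Longrightarrow> 0 \<le> g y"
  shows "(LINT z:A \<times> B|M \<Otimes>\<^sub>M N. case z of (x, y) \<Rightarrow> f x * g y) =
         (LINT x:A|M. f x) * (LINT y:B|N. g y)"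
proof -
  define F where "F x = indicator A x * f x" for x
  define G where "G y = indicator B y * g y" for y
  have [measurable]: "F \<in> borel_measurable M" "G \<in> borel_measurable N"
    unfolding F_def G_def by measurable
  have nonneg: "0 \<le> F x" "0 \<le> G y" for x y
    using assms(6,7) by (auto simp: F_def G_def indicator_def)
  have "(LINT z:A \<times> B|M \<Otimes>\<^sub>M N. case z of (x, y) \<Rightarrow> f x * g y) =
        integral\<^sup>L (M \<Otimes>\<^sub>M N) (\<lambda>z. F (fst z) * G (snd z))"
    unfolding set_lebesgue_integral_def F_def G_def
    by (intro Bochner_Integration.integral_cong) (auto simp: indicator_def)
  also have "\<dots> = enn2real (\<integral>\<^sup>+z. ennreal (F (fst z)) * ennreal (G (snd z)) \<partial>(M \<Otimes>\<^sub>M N))"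
    by (subst integral_eq_nn_integral) (auto simp: nonneg ennreal_mult)
  also have "\<dots> = enn2real (\<integral>\<^sup>+x. ennreal (F x) \<partial>M) * enn2real (\<integral>\<^sup>+y. ennreal (G y) \<partial>N)"
    by (subst nn_integral_pair_measure_mult[OF assms(1)]) (simp_all add: enn2real_mult)
  also have "\<dots> = (LINT x:A|M. f x) * (LINT y:B|N. g y)"
    unfolding set_lebesgue_integral_def
    by (subst (1 2) integral_eq_nn_integral) (auto simp: nonneg[unfolded F_def G_def] F_def G_def)
  finally show ?thesis .
qed

lemma sigma_finite_lborel_pair: "sigma_finite_measure (lborel \<Otimes>\<^sub>M (lborel :: real measure))"
  by (intro sigma_finite_pair_measure lborel.sigma_finite_measure_axioms)

lemma Beta_real_pos: "0 < p \<Longrightarrow> 0 < q \<Longrightarrow> 0 < Beta p (q::real)"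
  by (simp add: Beta_def Gamma_real_pos)

lemma nn_integral_Beta:
  fixes p q :: real
  assumes "0 < p" "0 < q"
  shows "(\<integral>\<^sup>+x. ennreal (indicator {0<..<1} x * (x powr (p - 1) * (1 - x) powr (q - 1))) \<partial>lborel) =
         ennreal (Beta p q)"
proof -
  have "((\<lambda>x. x powr (p - 1) * (1 - x) powr (q - 1)) has_integral Beta p q) {0<..<1}"
    using has_integral_Beta_real[OF assms] by (simp add: has_integral_Icc_iff_Ioo)
  from nn_integral_has_integral_lebesgue'[OF _ this] show ?thesis
    by (simp add: mult_ac ennreal_mult' ennreal_indicator)
qed

lemma set_integral_Beta:
  fixes p q :: real
  assumes "0 < p" "0 < q"
  shows "(LINT x:{0<..<1}|lborel. x powr (p - 1) * (1 - x) powr (q - 1)) = Beta p q"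
  unfolding set_lebesgue_integral_def
  by (subst integral_eq_nn_integral)
     (use nn_integral_Beta[OF assms] Beta_real_pos[OF assms] in \<open>auto simp: less_imp_le\<close>)

lemma beta_density_nonneg: "0 < p \<Longrightarrow> 0 < q \<Longrightarrow> 0 \<le> beta_density p q x"
  unfolding beta_density_def using Beta_real_pos[of p q] by simp

lemma set_integral_beta_density:
  assumes "0 < p" "0 < q"
  shows "(LINT x:{0<..<1}|lborel. beta_density p q x) = 1"
  unfolding beta_density_def
  using set_integral_Beta[OF assms] Beta_real_pos[OF assms]
  by (simp add: set_integral_divide_zero)

lemma beta_density_conjugate:
  assumes "0 < p" "0 < q" "0 < x" "x < 1"
  shows "x ^ n * (1 - x) ^ k * beta_density p q x =
         Beta (real n + p) (real k + q) / Beta p q * beta_density (real n + p) (real k + q) x"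
proof -
  have shift: "y powr (real j + c - 1) = y ^ j * y powr (c - 1)" if "0 < y" for y c :: real and j
    using that by (simp add: powr_add powr_realpow flip: add_diff_eq)
  have "0 < Beta (real n + p) (real k + q)" "0 < Beta p q"
    using assms by (simp_all add: Beta_real_pos)
  moreover have "0 < 1 - x"
    using assms by simp
  ultimately show ?thesis
    using assms unfolding beta_density_def shift[OF \<open>0 < x\<close>] shift[OF \<open>0 < 1 - x\<close>]
    by (simp add: field_simps)
qed

lemma gamma_prior_nonneg: "-1 < g \<Longrightarrow> 0 \<le> gamma_prior g"
  unfolding gamma_prior_def using Beta_real_pos[of "1/2" "1/2"] by simp

lemma gamma_prior_change_of_variables:
  fixes g :: real
  assumes "0 < g" "g < 1"
  shows "(2*g/(1+g)) powr (real k - 1/2) * (1 - 2*g/(1+g)) powr (real l - 1/2) * 2 / (1+g)^2 =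
         Beta (1/2) (1/2) * (gamma_prior g * (2*g/(1+g))^k * ((1-g)/(1+g))^l)"
proof -
  define s where "s = 2*g/(1+g)"
  have one_minus_s: "1 - s = (1-g)/(1+g)"
    using assms by (simp add: s_def field_simps)
  have s_pos: "0 < s" "0 < 1 - s"
    using assms by (auto simp: s_def one_minus_s)
  have split_powr: "x powr (real n - 1/2) = x ^ n / sqrt x" if "0 < x" for x :: real and n
  proof -
    have "x powr (real n - 1/2) = x powr real n * x powr (- (1/2))"
      by (simp flip: powr_add)
    then show ?thesis
      using that by (simp add: powr_realpow powr_minus_divide powr_half_sqrt)
  qed
  have "s * (1 - s) = 2 * g * (1 - g) / (1 + g)^2"
    unfolding one_minus_s using assms by (simp add: s_def field_simps power2_eq_square)
  then have "sqrt s * sqrt (1 - s) = sqrt 2 * sqrt g * sqrt (1 - g) / (1 + g)"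
    using assms by (simp add: real_sqrt_mult real_sqrt_divide flip: real_sqrt_mult)
  then have "2 / ((1+g)^2 * (sqrt s * sqrt (1 - s))) =
             (sqrt 2 * sqrt 2) / (sqrt 2 * ((sqrt g * sqrt (1 - g)) * (1 + g)))"
    using assms by (simp add: power2_eq_square)
  also have "\<dots> = sqrt 2 / (sqrt g * sqrt (1 - g) * (1 + g))"
    by (rule mult_divide_mult_cancel_left) simp
  also have "\<dots> = Beta (1/2) (1/2) * gamma_prior g"
    using assms Beta_real_pos[of "1/2" "1/2"]
    by (simp add: gamma_prior_def powr_minus_divide powr_half_sqrt)
  finally have jacobian: "2 / ((1+g)^2 * (sqrt s * sqrt (1 - s))) = Beta (1/2) (1/2) * gamma_prior g" .
  have "s ^ k / sqrt s * ((1 - s) ^ l / sqrt (1 - s)) * 2 / (1+g)^2 =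
        s ^ k * (1 - s) ^ l * (2 / ((1+g)^2 * (sqrt s * sqrt (1 - s))))"
    by (simp add: field_simps)
  then show ?thesis
    unfolding s_def[symmetric] one_minus_s[symmetric] split_powr[OF s_pos(1)] split_powr[OF s_pos(2)]
      jacobian
    by (simp add: mult_ac)
qed

lemma set_integral_gamma_prior:
  "(LINT g:{0<..<1}|lborel. gamma_prior g * (2*g/(1+g))^k * ((1-g)/(1+g))^l) =
   Beta (real k + 1/2) (real l + 1/2) / Beta (1/2) (1/2)"
proof -
  define G where "G g = gamma_prior g * (2*g/(1+g))^k * ((1-g)/(1+g))^l" for g :: real
  let ?s = "\<lambda>g::real. 2*g/(1+g)"
  let ?f = "\<lambda>s::real. s powr (real k - 1/2) * (1 - s) powr (real l - 1/2)"
  have [measurable]: "G \<in> borel_measurable borel"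
    unfolding G_def gamma_prior_def by measurable
  have B_pos: "0 < Beta (1/2) (1/2::real)"
    by (rule Beta_real_pos) simp_all
  have G_nonneg: "0 \<le> G g" if "0 < g" "g < 1" for g
    using that gamma_prior_nonneg[of g] unfolding G_def by simp
  have "ennreal (Beta (real k + 1/2) (real l + 1/2)) =
        (\<integral>\<^sup>+s. ennreal (indicator {0<..<1} s * ?f s) \<partial>lborel)"
    using nn_integral_Beta[of "real k + 1/2" "real l + 1/2"] by simp
  also have "\<dots> = (\<integral>\<^sup>+s. ennreal (?f s * indicator {?s 0..?s 1} s) \<partial>lborel)"
    by (intro nn_integral_cong_AE)
       (use AE_lborel_singleton[of 0] AE_lborel_singleton[of 1] in
         \<open>eventually_elim, auto simp: indicator_def\<close>)
  also have "\<dots> = (\<integral>\<^sup>+g. ennreal (?f (?s g) * (2/(1+g)^2) * indicator {0..1} g) \<partial>lborel)"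
    by (rule nn_integral_substitution)
       (auto intro!: derivative_eq_intros continuous_intros
         simp: set_borel_measurable_def field_simps power2_eq_square add_nonneg_eq_0_iff)
  also have "\<dots> = (\<integral>\<^sup>+g. ennreal (indicator {0<..<1} g * (Beta (1/2) (1/2) * G g)) \<partial>lborel)"
    by (intro nn_integral_cong_AE)
       (use AE_lborel_singleton[of 0] AE_lborel_singleton[of 1] in
         \<open>eventually_elim, auto simp: indicator_def G_def gamma_prior_change_of_variables\<close>)
  finally have "(\<integral>\<^sup>+g. ennreal (indicator {0<..<1} g * (Beta (1/2) (1/2) * G g)) \<partial>lborel) =
                ennreal (Beta (real k + 1/2) (real l + 1/2))" ..
  then have "(LINT g:{0<..<1}|lborel. Beta (1/2) (1/2) * G g) = Beta (real k + 1/2) (real l + 1/2)"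
    unfolding set_lebesgue_integral_def
    by (subst integral_eq_nn_integral)
       (auto simp: G_nonneg B_pos less_imp_le[OF Beta_real_pos] split: split_indicator)
  then show ?thesis
    using B_pos unfolding set_integral_mult_right G_def by (simp add: eq_divide_eq mult.commute)
qed

lemma dallal_lik_reparam:
  assumes "0 < g"
  shows "dallal_lik m g (u / (1+g)) (v / (1+g)) =
         mcoef m * ((2*g/(1+g)) ^ row m 1 * ((1-g)/(1+g)) ^ row m 2) *
         (u ^ (m 1 0 + m 2 0) * (1 - u) ^ m 0 0) * (v ^ (m 1 1 + m 2 1) * (1 - v) ^ m 0 1)"
proof -
  define A where "A = 2*g/(1+g)"
  define C where "C = (1-g)/(1+g)"
  have scale: "(1+g) * (x / (1+g)) = x" "2*g * (x / (1+g)) = A * x" "(1-g) * (x / (1+g)) = C * x" for x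
    using assms by (auto simp: A_def C_def field_simps)
  show ?thesis
    unfolding dallal_lik_def group_lik_def mcoef_def row_def scale A_def[symmetric] C_def[symmetric]
    by (simp add: power_mult_distrib power_add mult_ac)
qed

lemma prior_H0_eq: "prior_H0 a g t = gamma_prior g * beta_density a (1/2) t"
  unfolding prior_H0_def beta_density_def by simp

lemma prior_H1_unnorm_eq:
  "prior_H1_unnorm r d g u v =
     gamma_prior g * (u + r * v) powr d * beta_density (1/2) (1/2) u * beta_density (1/2) (1/2) v"
  unfolding prior_H1_unnorm_def beta_density_def by simp

lemma ratio_nonneg: "0 \<le> ratio m"
  unfolding ratio_def by simp

lemma pH0_eq:
  assumes "0 < a"
  shows "pH0 m a = mcoef m *
           (Beta (real (row m 1) + 1/2) (real (row m 2) + 1/2) / Beta (1/2) (1/2)) *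
           (Beta (real (row m 1 + row m 2) + a) (real (row m 0) + 1/2) / Beta a (1/2))"
proof -
  define c where "c = mcoef m * (Beta (real (row m 1 + row m 2) + a) (real (row m 0) + 1/2) / Beta a (1/2))"
  define G where "G g = gamma_prior g * (2*g/(1+g)) ^ row m 1 * ((1-g)/(1+g)) ^ row m 2" for g :: real
  define T where "T t = beta_density (real (row m 1 + row m 2) + a) (real (row m 0) + 1/2) t" for t :: real
  have [measurable]: "G \<in> borel_measurable borel"
    unfolding G_def gamma_prior_def by measurable
  have [measurable]: "T \<in> borel_measurable borel"
    unfolding T_def beta_density_def by measurable
  have integrand: "dallal_lik m g (t/(1+g)) (t/(1+g)) * prior_H0 a g t = c * (G g * T t)"
    if "0 < g" "g < 1" "0 < t" "t < 1" for g t
  proof -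
    have "dallal_lik m g (t/(1+g)) (t/(1+g)) * prior_H0 a g t =
          mcoef m * G g * (t ^ (row m 1 + row m 2) * (1-t) ^ row m 0 * beta_density a (1/2) t)"
      unfolding dallal_lik_reparam[OF \<open>0 < g\<close>] prior_H0_eq G_def
      by (simp add: row_def power_add ac_simps)
    also have "\<dots> = c * (G g * T t)"
      using beta_density_conjugate[of a "1/2" t "row m 1 + row m 2" "row m 0"] that assms
      by (simp add: c_def T_def)
    finally show ?thesis .
  qed
  have "pH0 m a = (LINT z:{0<..<1} \<times> {0<..<1}|lborel \<Otimes>\<^sub>M lborel. c * (case z of (g, t) \<Rightarrow> G g * T t))"
    unfolding pH0_def by (rule set_lebesgue_integral_cong) (auto simp: integrand)
  also have "\<dots> = c * ((LINT g:{0<..<1}|lborel. G g) * (LINT t:{0<..<1}|lborel. T t))"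
    using assms
    by (subst set_integral_mult_right, subst set_integral_Times_mult)
       (auto simp: G_def T_def gamma_prior_nonneg beta_density_nonneg lborel.sigma_finite_measure_axioms)
  also have "\<dots> = c * (Beta (real (row m 1) + 1/2) (real (row m 2) + 1/2) / Beta (1/2) (1/2))"
    using assms unfolding G_def T_def set_integral_gamma_prior
    by (simp add: set_integral_beta_density)
  finally show ?thesis
    by (simp add: c_def mult_ac)
qed

lemma pH1_eq:
  "pH1 m d = mcoef m *
     (Beta (real (row m 1) + 1/2) (real (row m 2) + 1/2) *
      Beta (real (m 1 0 + m 2 0) + 1/2) (real (m 0 0) + 1/2) *
      Beta (real (m 1 1 + m 2 1) + 1/2) (real (m 0 1) + 1/2) / Beta (1/2) (1/2) ^ 3) *
     (I_const m d / K_const (ratio m) d)"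
proof -
  define B where "B = Beta (1/2) (1/2::real)"
  define Bu where "Bu = Beta (real (m 1 0 + m 2 0) + 1/2) (real (m 0 0) + 1/2)"
  define Bv where "Bv = Beta (real (m 1 1 + m 2 1) + 1/2) (real (m 0 1) + 1/2)"
  define c where "c = mcoef m * (Bu / B) * (Bv / B) / K_const (ratio m) d"
  define G where "G g = gamma_prior g * (2*g/(1+g)) ^ row m 1 * ((1-g)/(1+g)) ^ row m 2" for g :: real
  define U where "U u = beta_density (real (m 1 0 + m 2 0) + 1/2) (real (m 0 0) + 1/2) u" for u :: real
  define V where "V v = beta_density (real (m 1 1 + m 2 1) + 1/2) (real (m 0 1) + 1/2) v" for v :: real
  define H where "H = (\<lambda>(u, v). (u + ratio m * v) powr d * U u * V v)"
  have [measurable]: "G \<in> borel_measurable borel"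
    unfolding G_def gamma_prior_def by measurable
  have [measurable]: "H \<in> borel_measurable (lborel \<Otimes>\<^sub>M lborel)"
    unfolding H_def U_def V_def beta_density_def by measurable
  have H_nonneg: "0 \<le> H w" for w
    by (auto simp: H_def U_def V_def beta_density_nonneg split: prod.split)
  have integrand: "dallal_lik m g (u/(1+g)) (v/(1+g)) * prior_H1 (ratio m) d g u v = c * (G g * H (u, v))"
    if "0 < g" "g < 1" "0 < u" "u < 1" "0 < v" "v < 1" for g u v
  proof -
    have "dallal_lik m g (u/(1+g)) (v/(1+g)) * prior_H1 (ratio m) d g u v =
          mcoef m * G g * (u + ratio m * v) powr d *
          (u ^ (m 1 0 + m 2 0) * (1 - u) ^ m 0 0 * beta_density (1/2) (1/2) u) *
          (v ^ (m 1 1 + m 2 1) * (1 - v) ^ m 0 1 * beta_density (1/2) (1/2) v) / K_const (ratio m) d"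
      unfolding dallal_lik_reparam[OF \<open>0 < g\<close>] prior_H1_def prior_H1_unnorm_eq G_def
      by (simp add: ac_simps)
    also have "\<dots> = c * (G g * H (u, v))"
      using beta_density_conjugate[of "1/2" "1/2" u "m 1 0 + m 2 0" "m 0 0"]
        beta_density_conjugate[of "1/2" "1/2" v "m 1 1 + m 2 1" "m 0 1"] that
      by (simp add: c_def H_def U_def V_def B_def Bu_def Bv_def)
    finally show ?thesis .
  qed
  have "pH1 m d = (LINT z:{0<..<1} \<times> ({0<..<1} \<times> {0<..<1})|lborel \<Otimes>\<^sub>M (lborel \<Otimes>\<^sub>M lborel).
                     c * (case z of (g, w) \<Rightarrow> G g * H w))"
    unfolding pH1_def by (rule set_lebesgue_integral_cong) (auto simp: integrand)
  also have "\<dots> = c * ((LINT g:{0<..<1}|lborel. G g) * (LINT w:{0<..<1} \<times> {0<..<1}|lborel \<Otimes>\<^sub>M lborel. H w))"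
    by (subst set_integral_mult_right, subst set_integral_Times_mult)
       (auto simp: G_def H_nonneg gamma_prior_nonneg sigma_finite_lborel_pair)
  also have "\<dots> = c * (Beta (real (row m 1) + 1/2) (real (row m 2) + 1/2) / B * I_const m d)"
    unfolding G_def set_integral_gamma_prior I_const_def H_def U_def V_def B_def ..
  finally show ?thesis
    by (simp add: c_def B_def Bu_def Bv_def power3_eq_cube mult_ac)
qed

lemma inverse_Bayes_factor:
  assumes "0 < a"
  shows "1 / (pH0 m a / pH1 m d) =
           (Beta (real (m 1 0 + m 2 0) + 1/2) (real (m 0 0) + 1/2) *
            Beta (real (m 1 1 + m 2 1) + 1/2) (real (m 0 1) + 1/2) * Beta a (1/2)) /
           (Beta (real (row m 1 + row m 2) + a) (real (row m 0) + 1/2) * Beta (1/2) (1/2) ^ 2) *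
           (I_const m d / K_const (ratio m) d)"
proof -
  have "0 < mcoef m"
    unfolding mcoef_def multinom3_def by simp
  moreover have "0 < Beta (real (row m 1) + 1/2) (real (row m 2) + 1/2)"
    "0 < Beta (real (row m 1 + row m 2) + a) (real (row m 0) + 1/2)"
    "0 < Beta (1/2) (1/2::real)" "0 < Beta a (1/2)"
    using assms by (auto intro!: Beta_real_pos)
  ultimately show ?thesis
    unfolding inverse_divide pH0_eq[OF assms] pH1_eq
    by (simp add: field_simps power2_eq_square power3_eq_cube)
qed

lemma K_const_zero:
  assumes "0 \<le> r"
  shows "K_const r 0 = 1"
proof -
  define U where "U u = beta_density (1/2) (1/2) u" for u :: real
  have [measurable]: "gamma_prior \<in> borel_measurable borel"
    unfolding gamma_prior_def by measurable
  have [measurable]: "U \<in> borel_measurable borel"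
    unfolding U_def beta_density_def by measurable
  have U_nonneg: "0 \<le> U u" for u
    unfolding U_def by (simp add: beta_density_nonneg)
  have "K_const r 0 = (LINT z:{0<..<1} \<times> ({0<..<1} \<times> {0<..<1})|lborel \<Otimes>\<^sub>M (lborel \<Otimes>\<^sub>M lborel).
                        case z of (g, w) \<Rightarrow> gamma_prior g * (case w of (u, v) \<Rightarrow> U u * U v))"
  proof -
    have "u + r * v \<noteq> 0" if "0 < u" "0 < v" for u v
      using assms that by (simp add: add_pos_nonneg less_imp_neq[symmetric])
    then show ?thesis
      unfolding K_const_def by (intro set_lebesgue_integral_cong) (auto simp: prior_H1_unnorm_eq U_def)
  qed
  also have "\<dots> = (LINT g:{0<..<1}|lborel. gamma_prior g) *
                    (LINT w:{0<..<1} \<times> {0<..<1}|lborel \<Otimes>\<^sub>M lborel. case w of (u, v) \<Rightarrow> U u * U v)"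
    by (rule set_integral_Times_mult)
       (auto simp: U_nonneg gamma_prior_nonneg sigma_finite_lborel_pair)
  also have "(LINT w:{0<..<1} \<times> {0<..<1}|lborel \<Otimes>\<^sub>M lborel. case w of (u, v) \<Rightarrow> U u * U v) =
             (LINT u:{0<..<1}|lborel. U u) * (LINT v:{0<..<1}|lborel. U v)"
    by (rule set_integral_Times_mult)
       (auto simp: U_nonneg lborel.sigma_finite_measure_axioms)
  also have "(LINT g:{0<..<1}|lborel. gamma_prior g) = 1"
    using set_integral_gamma_prior[of 0 0] Beta_real_pos[of "1/2" "1/2"] by simp
  also have "(LINT u:{0<..<1}|lborel. U u) = 1"
    by (simp add: U_def set_integral_beta_density)
  finally show ?thesis
    by simp
qed

lemma I_const_zero: "I_const m 0 = 1"
proof -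
  define U where "U u = beta_density (real (m 1 0 + m 2 0) + 1/2) (real (m 0 0) + 1/2) u" for u :: real
  define V where "V v = beta_density (real (m 1 1 + m 2 1) + 1/2) (real (m 0 1) + 1/2) v" for v :: real
  have [measurable]: "U \<in> borel_measurable borel"
    unfolding U_def beta_density_def by measurable
  have [measurable]: "V \<in> borel_measurable borel"
    unfolding V_def beta_density_def by measurable
  have U_nonneg: "0 \<le> U u" and V_nonneg: "0 \<le> V v" for u v
    unfolding U_def V_def by (simp_all add: beta_density_nonneg)
  have "I_const m 0 = (LINT w:{0<..<1} \<times> {0<..<1}|lborel \<Otimes>\<^sub>M lborel. case w of (u, v) \<Rightarrow> U u * V v)"
  proof -
    have "u + ratio m * v \<noteq> 0" if "0 < u" "0 < v" for u v
      using ratio_nonneg[of m] that by (simp add: add_pos_nonneg less_imp_neq[symmetric])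
    then show ?thesis
      unfolding I_const_def by (intro set_lebesgue_integral_cong) (auto simp: U_def V_def)
  qed
  also have "\<dots> = (LINT u:{0<..<1}|lborel. U u) * (LINT v:{0<..<1}|lborel. V v)"
    by (subst set_integral_Times_mult)
       (auto simp: U_nonneg V_nonneg lborel.sigma_finite_measure_axioms)
  also have "\<dots> = 1"
    by (simp add: U_def V_def set_integral_beta_density)
  finally show ?thesis .
qed

theorem mainTheorem12:
  fixes m :: "nat \<Rightarrow> nat \<Rightarrow> nat" and a d :: real
  assumes "0 < a" and "0 \<le> d" and "0 < col m 0"
  defines "K \<equiv> K_const (ratio m) d" and "I \<equiv> I_const m d"
  shows "(pH0 m a = mcoef m *
           (Beta (real (row m 1) + 1/2) (real (row m 2) + 1/2) / Beta (1/2) (1/2)) *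
           (Beta (real (row m 1 + row m 2) + a) (real (row m 0) + 1/2) / Beta a (1/2))) \<and>
         (pH1 m d = mcoef m *
           (Beta (real (row m 1) + 1/2) (real (row m 2) + 1/2) *
            Beta (real (m 1 0 + m 2 0) + 1/2) (real (m 0 0) + 1/2) *
            Beta (real (m 1 1 + m 2 1) + 1/2) (real (m 0 1) + 1/2) / Beta (1/2) (1/2) ^ 3) *
           (I / K)) \<and>
         (1 / (pH0 m a / pH1 m d) =
           (Beta (real (m 1 0 + m 2 0) + 1/2) (real (m 0 0) + 1/2) *
            Beta (real (m 1 1 + m 2 1) + 1/2) (real (m 0 1) + 1/2) * Beta a (1/2)) /
           (Beta (real (row m 1 + row m 2) + a) (real (row m 0) + 1/2) * Beta (1/2) (1/2) ^ 2) *
           (I / K)) \<and>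
         (d = 0 \<longrightarrow> K = 1 \<and> I = 1)"
proof -
  have "d = 0 \<longrightarrow> K = 1 \<and> I = 1"
    unfolding K_def I_def using K_const_zero[OF ratio_nonneg] I_const_zero by simp
  then show ?thesis
    using pH0_eq[OF \<open>0 < a\<close>] pH1_eq inverse_Bayes_factor[OF \<open>0 < a\<close>]
    unfolding K_def I_def by blast
qed

end
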